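(* Let $G$ be a connected graph with globally bounded vertex degree, i.e. there is $A<\infty$ with $\deg(v)\le A$ for every vertex $v$ of $G$. Then its clique graph $\mathcal{C}(G)$ also has globally bounded vertex degree, and $\mathcal{C}(G)$ is roughly isometric to $G$ with constants $C=\epsilon=1$. That is, there is a map $f$ from the vertex set of $G$ to the vertex set of $\mathcal{C}(G)$ such that $$d_G(v,v')-1\le d_{\mathcal{C}(G)}(f(v),f(v'))\le d_G(v,v')+1$$ for all vertices $v,v'$ of $G$, and every vertex of $\mathcal{C}(G)$ lies within $d_{\mathcal{C}(G)}$-distance $1$ of some point of $f(G)$.
   Context: A graph is regarded as a metric space on its vertex set via the graph metric: $d_G(v,v')$ is the minimal number of edges in a path joining $v$ and $v'$. A clique of $G$ is a maximal complete subgraph, i.e. a maximal set of vertices that are pairwise joined by edges. The clique graph $\mathcal{C}(G)$ has the cliques of $G$ as its vertices. Two cliques are joined by an edge in $\mathcal{C}(G)$ iff they share at least one vertex of $G$. $\mathcal{C}(G)$ carries its own graph metric $d_{\mathcal{C}(G)}$. A map $f:X\to Y$ between metric spaces is an $\epsilon$-rough isometry (with $C=\epsilon$) if $|d_Y(f(x),f(x'))-d_X(x,x')|\le\epsilon$ for all $x,x'\in X$ and every $y\in Y$ satisfies $d_Y(y,f(x))\le C$ for some $x\in X$. *)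

theory Defs
  imports Main "HOL-Library.Extended_Nat"
begin

definition simple_graph :: "'a set \<Rightarrow> ('a \<Rightarrow> 'a \<Rightarrow> bool) \<Rightarrow> bool" where
  "simple_graph V E \<longleftrightarrow> (\<forall>x y. E x y \<longrightarrow> x \<in> V \<and> y \<in> V \<and> x \<noteq> y \<and> E y x)"

definition walk :: "'a set \<Rightarrow> ('a \<Rightarrow> 'a \<Rightarrow> bool) \<Rightarrow> 'a list \<Rightarrow> bool" where
  "walk V E p \<longleftrightarrow> p \<noteq> [] \<and> set p \<subseteq> V \<and> (\<forall>i. Suc i < length p \<longrightarrow> E (p ! i) (p ! Suc i))"

definition connected_graph :: "'a set \<Rightarrow> ('a \<Rightarrow> 'a \<Rightarrow> bool) \<Rightarrow> bool" where
  "connected_graph V E \<longleftrightarrow> V \<noteq> {} \<and>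
     (\<forall>x\<in>V. \<forall>y\<in>V. \<exists>p. walk V E p \<and> hd p = x \<and> last p = y)"

text \<open>Graph metric: minimal number of edges of a walk from x to y (\<infinity> if none).\<close>
definition gdist :: "'a set \<Rightarrow> ('a \<Rightarrow> 'a \<Rightarrow> bool) \<Rightarrow> 'a \<Rightarrow> 'a \<Rightarrow> enat" where
  "gdist V E x y = (INF n \<in> {n. \<exists>p. walk V E p \<and> length p = Suc n \<and> hd p = x \<and> last p = y}. enat n)"

definition degree :: "'a set \<Rightarrow> ('a \<Rightarrow> 'a \<Rightarrow> bool) \<Rightarrow> 'a \<Rightarrow> nat" where
  "degree V E v = card {w \<in> V. E v w}"

definition bounded_degree :: "'a set \<Rightarrow> ('a \<Rightarrow> 'a \<Rightarrow> bool) \<Rightarrow> bool" where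
  "bounded_degree V E \<longleftrightarrow> (\<exists>A::nat. \<forall>v\<in>V. finite {w \<in> V. E v w} \<and> degree V E v \<le> A)"

definition complete_set :: "('a \<Rightarrow> 'a \<Rightarrow> bool) \<Rightarrow> 'a set \<Rightarrow> bool" where
  "complete_set E K \<longleftrightarrow> (\<forall>x\<in>K. \<forall>y\<in>K. x \<noteq> y \<longrightarrow> E x y)"

definition is_clique :: "'a set \<Rightarrow> ('a \<Rightarrow> 'a \<Rightarrow> bool) \<Rightarrow> 'a set \<Rightarrow> bool" where
  "is_clique V E K \<longleftrightarrow> K \<noteq> {} \<and> K \<subseteq> V \<and> complete_set E K \<and>
     (\<forall>K'. K \<subseteq> K' \<and> K' \<subseteq> V \<and> complete_set E K' \<longrightarrow> K' = K)"

definition cliques :: "'a set \<Rightarrow> ('a \<Rightarrow> 'a \<Rightarrow> bool) \<Rightarrow> 'a set set" where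
  "cliques V E = {K. is_clique V E K}"

definition clique_edge :: "'a set \<Rightarrow> ('a \<Rightarrow> 'a \<Rightarrow> bool) \<Rightarrow> 'a set \<Rightarrow> 'a set \<Rightarrow> bool" where
  "clique_edge V E K L \<longleftrightarrow> K \<in> cliques V E \<and> L \<in> cliques V E \<and> K \<noteq> L \<and> K \<inter> L \<noteq> {}"

end

theory Submission
  imports Defs
begin

text \<open>Send each vertex \<open>v\<close> to some clique containing it; cliques exist because every
  complete set lies in the finite closed neighbourhood of any of its vertices and hence extends to
  a maximal one. A walk \<open>K\<^sub>0, \<dots>, K\<^sub>n\<close> in the clique graph yields a walk of length \<open>n + 1\<close>
  in \<open>G\<close> through common vertices of consecutive cliques; conversely, choosing a clique through
  each edge of a walk of length \<open>n\<close> in \<open>G\<close> yields cliques of which consecutive ones meet, hence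
  a walk of length \<open>n + 1\<close> in the clique graph.\<close>

lemma walk_iff_successively: "walk V E p \<longleftrightarrow> p \<noteq> [] \<and> set p \<subseteq> V \<and> successively E p"
  unfolding walk_def successively_conv_nth by blast

lemma walk_singleton [simp]: "walk V E [x] \<longleftrightarrow> x \<in> V"
  by (simp add: walk_iff_successively)

lemma walk_Cons_Cons [simp]: "walk V E (x # y # p) \<longleftrightarrow> x \<in> V \<and> E x y \<and> walk V E (y # p)"
  by (auto simp: walk_iff_successively)

lemma walk_induct [consumes 1, case_names single cons]:
  assumes "walk V E p"
    and "\<And>x. x \<in> V \<Longrightarrow> P [x]"
    and "\<And>x y p. x \<in> V \<Longrightarrow> E x y \<Longrightarrow> walk V E (y # p) \<Longrightarrow> P (y # p) \<Longrightarrow> P (x # y # p)"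
  shows "P p"
  using assms(1)
proof (induction p)
  case (Cons x p)
  then show ?case using assms(2,3) by (cases p) auto
qed (simp add: walk_def)

lemma walk_append:
  assumes "walk V E p" "walk V E q" "last p = hd q"
  shows "walk V E (p @ tl q)"
  using assms by (cases q) (auto simp: walk_iff_successively successively_append_iff successively_Cons)

lemma gdist_le_walk_length:
  assumes "walk V E p" shows "gdist V E (hd p) (last p) \<le> enat (length p - 1)"
proof -
  have "length p = Suc (length p - 1)" using assms by (simp add: walk_def)
  then show ?thesis unfolding gdist_def by (intro INF_lower) (use assms in blast)
qed

lemma gdist_attained:
  assumes "gdist V E x y \<noteq> \<infinity>"
  obtains p where "walk V E p" "hd p = x" "last p = y" "gdist V E x y = enat (length p - 1)"
proof -
  define S where "S = {n. \<exists>p. walk V E p \<and> length p = Suc n \<and> hd p = x \<and> last p = y}"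
  have dist: "gdist V E x y = (INF n\<in>S. enat n)" unfolding gdist_def S_def ..
  with assms have "S \<noteq> {}" by (auto simp: top_enat_def)
  then have "(LEAST n. n \<in> S) \<in> S" by (meson LeastI ex_in_conv)
  moreover have "gdist V E x y = enat (LEAST n. n \<in> S)"
    unfolding dist by (intro antisym INF_lower INF_greatest calculation) (simp add: Least_le)
  ultimately show thesis using that unfolding S_def by auto
qed

lemma gdist_triangle: "gdist V E x z \<le> gdist V E x y + gdist V E y z"
proof (cases "gdist V E x y = \<infinity> \<or> gdist V E y z = \<infinity>")
  case False
  then obtain p q where
    p: "walk V E p" "hd p = x" "last p = y" "gdist V E x y = enat (length p - 1)" and
    q: "walk V E q" "hd q = y" "last q = z" "gdist V E y z = enat (length q - 1)"
    by (metis gdist_attained)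
  obtain q' where q': "q = y # q'" using q by (cases q) (auto simp: walk_def)
  have "p \<noteq> []" using p by (simp add: walk_def)
  then have ends: "hd (p @ tl q) = x" "last (p @ tl q) = z"
    and length: "length (p @ tl q) - 1 = (length p - 1) + (length q - 1)"
    using p q q' by (auto simp: last_append neq_Nil_conv)
  have "gdist V E x z \<le> enat (length (p @ tl q) - 1)"
    using gdist_le_walk_length[OF walk_append[OF p(1) q(1)]] p(3) q(2) ends by simp
  also have "\<dots> = gdist V E x y + gdist V E y z"
    unfolding length p(4) q(4) by simp
  finally show ?thesis .
qed (auto simp: plus_eq_infty_iff_enat)

lemma gdist_le_1:
  assumes "x \<in> V" "y \<in> V" "x = y \<or> E x y"
  shows "gdist V E x y \<le> 1"
proof (cases "x = y")
  case True
  have "gdist V E x x \<le> 0" using assms gdist_le_walk_length[of V E "[x]"] by (simp add: enat_0)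
  then show ?thesis using True by simp
next
  case False
  then have "gdist V E x y \<le> enat 1" using assms gdist_le_walk_length[of V E "[x, y]"] by simp
  then show ?thesis by (simp add: one_enat_def)
qed

lemma le_gdist_plus_1I:
  assumes "\<And>p. walk V E p \<Longrightarrow> hd p = x \<Longrightarrow> last p = y \<Longrightarrow> d \<le> enat (length p)"
  shows "d \<le> gdist V E x y + 1"
proof (cases "gdist V E x y = \<infinity>")
  case False
  then obtain p where p: "walk V E p" "hd p = x" "last p = y" "gdist V E x y = enat (length p - 1)"
    by (rule gdist_attained)
  have "length p = Suc (length p - 1)" using p(1) by (simp add: walk_def)
  then have "enat (length p) = gdist V E x y + 1"
    unfolding p(4) by (metis eSuc_enat plus_1_eSuc(2))
  then show ?thesis using assms[OF p(1-3)] by simp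
qed simp

lemma complete_set_subset_closed_nbhd:
  assumes "K \<subseteq> V" "complete_set E K" "v \<in> K"
  shows "K \<subseteq> insert v {w \<in> V. E v w}"
proof
  fix w assume "w \<in> K"
  with assms show "w \<in> insert v {w \<in> V. E v w}"
    unfolding complete_set_def by (cases "w = v") auto
qed

lemma complete_set_extends_to_clique:
  assumes locally_finite: "\<forall>v\<in>V. finite {w \<in> V. E v w}"
    and S: "S \<noteq> {}" "S \<subseteq> V" "complete_set E S"
  obtains K where "K \<in> cliques V E" "S \<subseteq> K"
proof -
  obtain v where v: "v \<in> S" "v \<in> V" using S by blast
  define A where "A = {K. S \<subseteq> K \<and> K \<subseteq> V \<and> complete_set E K}"
  have "A \<subseteq> Pow (insert v {w \<in> V. E v w})"
  proof
    fix K assume "K \<in> A"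
    then show "K \<in> Pow (insert v {w \<in> V. E v w})"
      using complete_set_subset_closed_nbhd[of K V E v] v(1) unfolding A_def by auto
  qed
  moreover have "finite (Pow (insert v {w \<in> V. E v w}))"
    using locally_finite v(2) by simp
  ultimately have "finite A" by (rule finite_subset)
  moreover have "S \<in> A" unfolding A_def using S by simp
  ultimately have "\<exists>K\<in>A. S \<subseteq> K \<and> (\<forall>K'\<in>A. K \<subseteq> K' \<longrightarrow> K = K')"
    by (rule finite_has_maximal2)
  then obtain K where K: "K \<in> A" "S \<subseteq> K" and maximal: "\<forall>K'\<in>A. K \<subseteq> K' \<longrightarrow> K = K'"
    by blast
  have "is_clique V E K"
    unfolding is_clique_def
  proof (intro conjI allI impI)
    show "K \<noteq> {}" using K(2) S(1) by blast
    show "K \<subseteq> V" "complete_set E K" using K(1) unfolding A_def by simp_all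
    show "K' = K" if "K \<subseteq> K' \<and> K' \<subseteq> V \<and> complete_set E K'" for K'
    proof -
      have "K' \<in> A" using that K(2) unfolding A_def by blast
      then show ?thesis using maximal that by blast
    qed
  qed
  with K(2) that show thesis by (simp add: cliques_def)
qed

lemma edge_in_clique:
  assumes "simple_graph V E" "\<forall>v\<in>V. finite {w \<in> V. E v w}" "E u w"
  obtains K where "K \<in> cliques V E" "u \<in> K" "w \<in> K"
proof -
  have "u \<in> V" "w \<in> V" "E w u"
    using assms(1)[unfolded simple_graph_def, rule_format, OF assms(3)] by simp_all
  then have "complete_set E {u, w}" "{u, w} \<subseteq> V"
    using assms(3) unfolding complete_set_def by auto
  then obtain K where "K \<in> cliques V E" "{u, w} \<subseteq> K"
    using complete_set_extends_to_clique[OF assms(2), of "{u, w}"] by auto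
  with that show thesis by simp
qed

lemma vertex_in_clique:
  assumes "\<forall>v\<in>V. finite {w \<in> V. E v w}" "v \<in> V"
  shows "\<exists>K\<in>cliques V E. v \<in> K"
proof -
  have "complete_set E {v}" by (simp add: complete_set_def)
  with assms obtain K where "K \<in> cliques V E" "{v} \<subseteq> K"
    by (elim complete_set_extends_to_clique) auto
  then show ?thesis by blast
qed

lemma gdist_le_1_in_clique:
  assumes "K \<in> cliques V E" "v \<in> K" "v' \<in> K"
  shows "gdist V E v v' \<le> 1"
proof (rule gdist_le_1)
  show "v \<in> V" "v' \<in> V" "v = v' \<or> E v v'"
    using assms unfolding cliques_def is_clique_def complete_set_def by auto
qed

lemma gdist_clique_graph_le_1:
  assumes "K \<in> cliques V E" "L \<in> cliques V E" "v \<in> K" "v \<in> L"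
  shows "gdist (cliques V E) (clique_edge V E) K L \<le> 1"
proof (rule gdist_le_1)
  show "K = L \<or> clique_edge V E K L"
    using assms unfolding clique_edge_def by auto
qed (use assms in auto)

lemma gdist_le_clique_walk_length:
  assumes "walk (cliques V E) (clique_edge V E) Ks" "v \<in> hd Ks" "v' \<in> last Ks"
  shows "gdist V E v v' \<le> enat (length Ks)"
  using assms
proof (induction Ks arbitrary: v rule: walk_induct)
  case (single K)
  then have "gdist V E v v' \<le> 1" by (intro gdist_le_1_in_clique) auto
  then show ?case by (simp add: one_enat_def)
next
  case (cons K L Ks)
  then obtain w where w: "w \<in> K" "w \<in> L" unfolding clique_edge_def by blast
  have "gdist V E v v' \<le> gdist V E v w + gdist V E w v'" by (rule gdist_triangle)
  also have "\<dots> \<le> 1 + enat (length (L # Ks))"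
    using cons w by (intro add_mono gdist_le_1_in_clique) auto
  finally show ?case by (simp add: one_enat_def)
qed

lemma gdist_clique_graph_le_walk_length:
  assumes "simple_graph V E" "\<forall>v\<in>V. finite {w \<in> V. E v w}"
    and "walk V E p" "K \<in> cliques V E" "hd p \<in> K" "K' \<in> cliques V E" "last p \<in> K'"
  shows "gdist (cliques V E) (clique_edge V E) K K' \<le> enat (length p)"
  using assms(3-)
proof (induction p arbitrary: K rule: walk_induct)
  case (single x)
  then have "gdist (cliques V E) (clique_edge V E) K K' \<le> 1" by (intro gdist_clique_graph_le_1) auto
  then show ?case by (simp add: one_enat_def)
next
  case (cons x y p)
  then obtain L where L: "L \<in> cliques V E" "x \<in> L" "y \<in> L"
    using edge_in_clique[OF assms(1,2)] by blast
  have "gdist (cliques V E) (clique_edge V E) K K' \<le>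
      gdist (cliques V E) (clique_edge V E) K L + gdist (cliques V E) (clique_edge V E) L K'"
    by (rule gdist_triangle)
  also have "\<dots> \<le> 1 + enat (length (y # p))"
    using cons L by (intro add_mono gdist_clique_graph_le_1) auto
  finally show ?case by (simp add: one_enat_def)
qed

lemma clique_subset_closed_nbhd:
  assumes "K \<in> cliques V E" "v \<in> K"
  shows "K \<subseteq> insert v {w \<in> V. E v w}"
proof (rule complete_set_subset_closed_nbhd)
  show "K \<subseteq> V" "complete_set E K" using assms(1) unfolding cliques_def is_clique_def by auto
qed (fact assms(2))

lemma clique_graph_nbhd_subset:
  assumes "K \<in> cliques V E"
  shows "{L \<in> cliques V E. clique_edge V E K L} \<subseteq> Pow (\<Union>w\<in>K. insert w {u \<in> V. E w u})"
proof
  fix L assume "L \<in> {L \<in> cliques V E. clique_edge V E K L}"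
  then obtain w where L: "L \<in> cliques V E" and w: "w \<in> K" "w \<in> L"
    unfolding clique_edge_def by blast
  have "L \<subseteq> insert w {u \<in> V. E w u}" using L w(2) by (rule clique_subset_closed_nbhd)
  with w(1) show "L \<in> Pow (\<Union>w\<in>K. insert w {u \<in> V. E w u})" by blast
qed

text \<open>A clique lies in the closed neighbourhood of any of its vertices, so it has at most
  \<open>A + 1\<close> vertices, and every clique meeting it lies in the union of the closed neighbourhoods
  of its vertices, a set of at most \<open>(A + 1)\<^sup>2\<close> vertices.\<close>

lemma bounded_degree_cliques:
  assumes "bounded_degree V E"
  shows "bounded_degree (cliques V E) (clique_edge V E)"
proof -
  obtain A where A: "\<forall>v\<in>V. finite {w \<in> V. E v w} \<and> degree V E v \<le> A"
    using assms unfolding bounded_degree_def by blast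
  define N where "N v = insert v {w \<in> V. E v w}" for v
  have N: "finite (N v)" "card (N v) \<le> Suc A" if "v \<in> V" for v
  proof -
    have "finite {w \<in> V. E v w}" "card {w \<in> V. E v w} \<le> A"
      using A that unfolding degree_def by auto
    moreover have "card (N v) \<le> Suc (card {w \<in> V. E v w})"
      unfolding N_def using calculation(1) by (simp add: card_insert_if)
    ultimately show "finite (N v)" "card (N v) \<le> Suc A" unfolding N_def by simp_all
  qed
  have "finite {L \<in> cliques V E. clique_edge V E K L} \<and>
      card {L \<in> cliques V E. clique_edge V E K L} \<le> 2 ^ (Suc A * Suc A)"
    if K: "K \<in> cliques V E" for K
  proof -
    have KV: "K \<subseteq> V" and "K \<noteq> {}" using K unfolding cliques_def is_clique_def by auto
    then obtain v where v: "v \<in> K" "v \<in> V" by blast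
    have K_sub: "K \<subseteq> N v" unfolding N_def using K v(1) by (rule clique_subset_closed_nbhd)
    have fK: "finite K" using K_sub N(1)[OF v(2)] by (rule finite_subset)
    have "card K \<le> card (N v)" using N(1)[OF v(2)] K_sub by (rule card_mono)
    with N(2)[OF v(2)] have cK: "card K \<le> Suc A" by linarith
    define U where "U = (\<Union>w\<in>K. N w)"
    have fU: "finite U" unfolding U_def using fK N(1) KV by (intro finite_UN_I) auto
    have "card U \<le> (\<Sum>w\<in>K. card (N w))" unfolding U_def by (rule card_UN_le[OF fK])
    also have "\<dots> \<le> (\<Sum>w\<in>K. Suc A)" using N(2) KV by (intro sum_mono) blast
    also have "\<dots> = card K * Suc A" by simp
    also have "\<dots> \<le> Suc A * Suc A" using cK by (rule mult_le_mono1)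
    finally have cU: "card U \<le> Suc A * Suc A" .
    have nbhd: "{L \<in> cliques V E. clique_edge V E K L} \<subseteq> Pow U"
      unfolding U_def N_def using K by (rule clique_graph_nbhd_subset)
    have "card {L \<in> cliques V E. clique_edge V E K L} \<le> card (Pow U)"
      using fU nbhd by (simp add: card_mono)
    also have "\<dots> \<le> 2 ^ (Suc A * Suc A)"
      unfolding card_Pow[OF fU] using cU by (rule power_increasing) simp
    finally show ?thesis using finite_subset[OF nbhd] fU by simp
  qed
  then show ?thesis unfolding bounded_degree_def degree_def by blast
qed

theorem mainTheorem1:
  fixes V :: "'a set" and E :: "'a \<Rightarrow> 'a \<Rightarrow> bool"
  assumes "simple_graph V E" and "connected_graph V E" and "bounded_degree V E"
  shows "bounded_degree (cliques V E) (clique_edge V E) \<and>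
    (\<exists>f. f ` V \<subseteq> cliques V E \<and>
      (\<forall>v\<in>V. \<forall>v'\<in>V.
         gdist V E v v' \<le> gdist (cliques V E) (clique_edge V E) (f v) (f v') + 1 \<and>
         gdist (cliques V E) (clique_edge V E) (f v) (f v') \<le> gdist V E v v' + 1) \<and>
      (\<forall>K\<in>cliques V E. \<exists>v\<in>V. gdist (cliques V E) (clique_edge V E) K (f v) \<le> 1))"
proof -
  let ?C = "cliques V E" and ?CE = "clique_edge V E"
  have locally_finite: "\<forall>v\<in>V. finite {w \<in> V. E v w}"
    using assms(3) unfolding bounded_degree_def by blast
  define f where "f v = (SOME K. K \<in> ?C \<and> v \<in> K)" for v
  have f: "f v \<in> ?C \<and> v \<in> f v" if "v \<in> V" for v
    unfolding f_def by (rule someI_ex) (use vertex_in_clique[OF locally_finite that] in blast)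
  have lower: "gdist V E v v' \<le> gdist ?C ?CE (f v) (f v') + 1" if "v \<in> V" "v' \<in> V" for v v'
  proof (rule le_gdist_plus_1I)
    show "gdist V E v v' \<le> enat (length Ks)"
      if "walk ?C ?CE Ks" "hd Ks = f v" "last Ks = f v'" for Ks
      using gdist_le_clique_walk_length[OF that(1)] that(2,3) f \<open>v \<in> V\<close> \<open>v' \<in> V\<close> by simp
  qed
  have upper: "gdist ?C ?CE (f v) (f v') \<le> gdist V E v v' + 1" if "v \<in> V" "v' \<in> V" for v v'
  proof (rule le_gdist_plus_1I)
    show "gdist ?C ?CE (f v) (f v') \<le> enat (length p)"
      if "walk V E p" "hd p = v" "last p = v'" for p
      using gdist_clique_graph_le_walk_length[OF assms(1) locally_finite that(1)] that(2,3)
        f \<open>v \<in> V\<close> \<open>v' \<in> V\<close> by simp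
  qed
  have covering: "\<exists>v\<in>V. gdist ?C ?CE K (f v) \<le> 1" if K: "K \<in> ?C" for K
  proof -
    obtain v where v: "v \<in> K" "v \<in> V" using K unfolding cliques_def is_clique_def by blast
    then have "gdist ?C ?CE K (f v) \<le> 1" using gdist_clique_graph_le_1[OF K] f by blast
    with v show ?thesis by blast
  qed
  have "f ` V \<subseteq> ?C" using f by blast
  with bounded_degree_cliques[OF assms(3)] lower upper covering show ?thesis by blast
qed

end
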